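(* Let $I=(x_1,\ldots,x_n)$ be any list of items with sizes $x_i\in(1/3,1]$. Then $$\mathbb{E}[\mathrm{BF}(I^\sigma)] \le \frac{5}{4}\,\mathrm{OPT}(I)+\frac14,$$ where $\sigma$ is drawn uniformly at random from the set $\mathcal{S}_n$ of permutations of $[n]$ and the expectation is over $\sigma$.
   Context: Bin packing: given a list $I=(x_1,\ldots,x_n)$ of items with sizes in $(0,1]$, a packing assigns items to unit-capacity bins so that the total size of items in each bin is at most $1$. $\mathrm{OPT}(I)$ denotes the minimum number of bins in a feasible packing. The online algorithm Best Fit (BF) processes the items in the given order and packs the current item into the fullest bin (largest current load) into which it fits, opening a new bin if it fits into no existing bin; items are never moved. $\mathrm{BF}(I)$ denotes the number of bins Best Fit uses on list $I$. For a permutation $\sigma\in\mathcal{S}_n$, $I^\sigma=(x_{\sigma(1)},\ldots,x_{\sigma(n)})$. *)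

theory Defs
  imports Complex_Main "HOL-Combinatorics.Permutations"
begin

definition feasible_packing :: "real list \<Rightarrow> nat \<Rightarrow> (nat \<Rightarrow> nat) \<Rightarrow> bool" where
  "feasible_packing xs k f \<longleftrightarrow>
     (\<forall>i<length xs. f i < k) \<and>
     (\<forall>b<k. (\<Sum>i\<in>{i. i < length xs \<and> f i = b}. xs ! i) \<le> 1)"

definition OPT :: "real list \<Rightarrow> nat" where
  "OPT xs = (LEAST k. \<exists>f. feasible_packing xs k f)"

(* Best Fit step: loads is the list of current bin loads (in opening order).
   The item x goes into a fullest bin into which it fits (first such bin among
   those of maximal load; ties between equal loads are irrelevant since bins
   with equal load are interchangeable), or into a new bin. *)
definition bf_step :: "real list \<Rightarrow> real \<Rightarrow> real list" where
  "bf_step loads x =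
     (let fits = filter (\<lambda>j. loads ! j + x \<le> 1) [0..<length loads] in
      if fits = [] then loads @ [x]
      else let m = Max ((\<lambda>j. loads ! j) ` set fits);
               j = hd (filter (\<lambda>j. loads ! j = m) fits)
           in loads[j := loads ! j + x])"

definition BF :: "real list \<Rightarrow> nat" where
  "BF xs = length (foldl bf_step [] xs)"

(* I^sigma = (x_{sigma(1)}, ..., x_{sigma(n)}), 0-indexed *)
definition permute_list_by :: "(nat \<Rightarrow> nat) \<Rightarrow> real list \<Rightarrow> real list" where
  "permute_list_by \<sigma> xs = map (\<lambda>i. xs ! \<sigma> i) [0..<length xs]"

definition expected_BF_random_order :: "real list \<Rightarrow> real" where
  "expected_BF_random_order xs =
     (\<Sum>\<sigma>\<in>{\<sigma>. \<sigma> permutes {..<length xs}}. real (BF (permute_list_by \<sigma> xs)))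
       / real (fact (length xs))"

end

(* Items larger than 1/3 go at most two to a bin, in an optimal packing as well as in
   Best Fit.  Call an item large if it exceeds 1/2 and small otherwise.  In an optimal
   packing no two large items share a bin; if D is the set of small items sharing a bin
   with a large item g c, counting gives 2 n <= 2 OPT + #small + |D| and |D| <= OPT.
   Best Fit never keeps two bins of load at most 1/2, whence 2 BF + #small + k <= 2 n + 1,
   where k is the number of Best Fit bins pairing a large with a small item.  A potential
   argument shows k >= #{c in D. c arrives after g c}, so 2 BF <= 2 OPT + Y + 1 where Y
   counts the c in D arriving before g c.  Swapping the positions of one c in D and g c
   pairs up the permutations so that E[(Y + 1) div 2] <= (|D| + 1) / 4 <= (OPT + 1) / 4. *)

theory Submission
  imports Defs
begin

definition bf_target :: "real list \<Rightarrow> real \<Rightarrow> nat option" where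
  "bf_target loads x =
     (let fits = filter (\<lambda>j. loads ! j + x \<le> 1) [0..<length loads] in
      if fits = [] then None
      else Some (hd (filter (\<lambda>j. loads ! j = Max ((\<lambda>j. loads ! j) ` set fits)) fits)))"

lemma bf_step_eq_bf_target:
  "bf_step loads x =
     (case bf_target loads x of None \<Rightarrow> loads @ [x] | Some j \<Rightarrow> loads[j := loads ! j + x])"
  by (simp add: bf_step_def bf_target_def Let_def)

lemma bf_target_None_iff: "bf_target loads x = None \<longleftrightarrow> (\<forall>l\<in>set loads. 1 < l + x)"
  by (auto simp: bf_target_def Let_def filter_empty_conv in_set_conv_nth not_le) force

lemma bf_target_SomeD:
  assumes "bf_target loads x = Some j"
  shows "j < length loads" "loads ! j + x \<le> 1"
    and "\<And>l. l \<in> set loads \<Longrightarrow> l + x \<le> 1 \<Longrightarrow> l \<le> loads ! j"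
proof -
  define fits where "fits = filter (\<lambda>j. loads ! j + x \<le> 1) [0..<length loads]"
  define m where "m = Max ((\<lambda>j. loads ! j) ` set fits)"
  have "fits \<noteq> []" and j: "j = hd (filter (\<lambda>j. loads ! j = m) fits)"
    using assms by (auto simp: bf_target_def Let_def fits_def m_def split: if_splits)
  then have "m \<in> (\<lambda>j. loads ! j) ` set fits"
    unfolding m_def by (intro Max_in) auto
  then have "filter (\<lambda>j. loads ! j = m) fits \<noteq> []"
    by (auto simp: filter_empty_conv)
  then have "j \<in> set fits" and jm: "loads ! j = m"
    using hd_in_set[of "filter (\<lambda>j. loads ! j = m) fits"] unfolding j by auto
  then show "j < length loads" "loads ! j + x \<le> 1"
    by (auto simp: fits_def)
  fix l assume "l \<in> set loads" "l + x \<le> 1"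
  then have "l \<in> (\<lambda>j. loads ! j) ` set fits"
    by (auto simp: fits_def in_set_conv_nth)
  then show "l \<le> loads ! j"
    unfolding jm m_def by (intro Max_ge) auto
qed

lemma bf_step_loads_le_1:
  assumes "\<forall>l\<in>set loads. l \<le> 1" and "x \<le> 1"
  shows "\<forall>l\<in>set (bf_step loads x). l \<le> 1"
proof (cases "bf_target loads x")
  case (Some j)
  then show ?thesis
    using assms bf_target_SomeD(2)[OF Some] set_update_subset_insert[of loads j]
    by (auto simp: bf_step_eq_bf_target)
qed (use assms in \<open>simp add: bf_step_eq_bf_target\<close>)

text \<open>Best Fit never keeps two bins that are at most half full: an item of size at most
  \<open>1/2\<close> would fit into the first of them, so the second one would not have been opened.\<close>

lemma bf_step_at_most_one_light:
  assumes "length (filter (\<lambda>l. l \<le> 1/2) loads) \<le> 1" and "0 \<le> x"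
  shows "length (filter (\<lambda>l. l \<le> 1/2) (bf_step loads x)) \<le> 1"
proof (cases "bf_target loads x")
  case None
  then have "filter (\<lambda>l. l \<le> 1/2) loads = []" if "x \<le> 1/2"
    using that by (auto simp: bf_target_None_iff filter_empty_conv)
  then show ?thesis
    using None assms(1) by (auto simp: bf_step_eq_bf_target)
next
  case (Some j)
  have "{i. i < length loads \<and> loads[j := loads ! j + x] ! i \<le> 1/2}
          \<subseteq> {i. i < length loads \<and> loads ! i \<le> 1/2}"
    using \<open>0 \<le> x\<close> bf_target_SomeD(1)[OF Some] by (auto simp: nth_list_update split: if_splits)
  then have "length (filter (\<lambda>l. l \<le> 1/2) (loads[j := loads ! j + x]))
               \<le> length (filter (\<lambda>l. l \<le> 1/2) loads)"
    unfolding length_filter_conv_card by (auto intro: card_mono)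
  then show ?thesis
    using Some assms(1) by (simp add: bf_step_eq_bf_target)
qed

lemma foldl_bf_step_loads:
  assumes "\<forall>x\<in>set xs. 0 \<le> x \<and> x \<le> 1"
    and "\<forall>l\<in>set loads. l \<le> 1" and "length (filter (\<lambda>l. l \<le> 1/2) loads) \<le> 1"
  shows "(\<forall>l\<in>set (foldl bf_step loads xs). l \<le> 1) \<and>
         length (filter (\<lambda>l. l \<le> 1/2) (foldl bf_step loads xs)) \<le> 1"
  using assms
proof (induction xs arbitrary: loads)
  case (Cons x xs)
  from Cons.prems(1) have x: "0 \<le> x" "x \<le> 1" and xs: "\<forall>x\<in>set xs. 0 \<le> x \<and> x \<le> 1"
    by simp_all
  show ?case
    using Cons.IH[OF xs bf_step_loads_le_1[OF Cons.prems(2) x(2)]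
        bf_step_at_most_one_light[OF Cons.prems(3) x(1)]]
    by simp
qed simp

text \<open>Best Fit run on item positions: a bin is the list of positions of its items in \<open>ys\<close>,
  so that individual items can be followed through the run.\<close>

definition bin_load :: "real list \<Rightarrow> nat list \<Rightarrow> real" where
  "bin_load ys b = (\<Sum>i\<leftarrow>b. ys ! i)"

definition bf_bins_step :: "real list \<Rightarrow> nat list list \<Rightarrow> nat \<Rightarrow> nat list list" where
  "bf_bins_step ys B t =
     (case bf_target (map (bin_load ys) B) (ys ! t) of
        None \<Rightarrow> B @ [[t]]
      | Some j \<Rightarrow> B[j := B ! j @ [t]])"

definition bf_bins :: "real list \<Rightarrow> nat \<Rightarrow> nat list list" where
  "bf_bins ys t = foldl (bf_bins_step ys) [] [0..<t]"

lemma bf_bins_0 [simp]: "bf_bins ys 0 = []"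
  by (simp add: bf_bins_def)

lemma bf_bins_Suc: "bf_bins ys (Suc t) = bf_bins_step ys (bf_bins ys t) t"
  by (simp add: bf_bins_def)

lemma bin_load_simps [simp]:
  "bin_load ys [] = 0"
  "bin_load ys (i # b) = ys ! i + bin_load ys b"
  "bin_load ys (b @ c) = bin_load ys b + bin_load ys c"
  by (simp_all add: bin_load_def)

lemma bin_loads_bf_bins_step:
  "map (bin_load ys) (bf_bins_step ys B t) = bf_step (map (bin_load ys) B) (ys ! t)"
  by (auto simp: bf_bins_step_def bf_step_eq_bf_target map_update
      dest: bf_target_SomeD(1) split: option.split)

lemma bin_loads_bf_bins:
  "t \<le> length ys \<Longrightarrow> map (bin_load ys) (bf_bins ys t) = foldl bf_step [] (take t ys)"
  by (induction t) (simp_all add: bf_bins_Suc bin_loads_bf_bins_step take_Suc_conv_app_nth)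

lemma BF_eq_length_bf_bins: "BF ys = length (bf_bins ys (length ys))"
  using arg_cong[OF bin_loads_bf_bins[of "length ys" ys], of length] by (simp add: BF_def)

lemma mset_concat_update_append:
  "j < length B \<Longrightarrow> mset (concat (B[j := B ! j @ c])) = mset (concat B) + mset c"
proof (induction B arbitrary: j)
  case (Cons b B)
  then show ?case by (cases j) (simp_all add: ac_simps)
qed simp

lemma mset_concat_bf_bins: "mset (concat (bf_bins ys t)) = mset [0..<t]"
  by (induction t)
    (auto simp: bf_bins_Suc bf_bins_step_def mset_concat_update_append
      dest: bf_target_SomeD(1) split: option.split)

lemma set_concat_bf_bins: "set (concat (bf_bins ys t)) = {..<t}"
  using mset_eq_setD[OF mset_concat_bf_bins] by auto

lemma Nil_notin_bf_bins: "[] \<notin> set (bf_bins ys t)"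
proof (induction t)
  case (Suc t)
  then show ?case
    by (auto simp: bf_bins_Suc bf_bins_step_def split: option.split
        dest: subsetD[OF set_update_subset_insert])
qed simp

lemma bf_bins_loads:
  assumes "\<forall>x\<in>set ys. 0 \<le> x \<and> x \<le> 1" and "t \<le> length ys"
  shows "\<forall>b\<in>set (bf_bins ys t). bin_load ys b \<le> 1"
    and "length (filter (\<lambda>b. bin_load ys b \<le> 1/2) (bf_bins ys t)) \<le> 1"
proof -
  have "\<forall>x\<in>set (take t ys). 0 \<le> x \<and> x \<le> 1"
    using assms(1) by (auto dest: in_set_takeD)
  from foldl_bf_step_loads[OF this, of "[]"]
  have "(\<forall>l\<in>set (map (bin_load ys) (bf_bins ys t)). l \<le> 1) \<and>
        length (filter (\<lambda>l. l \<le> 1/2) (map (bin_load ys) (bf_bins ys t))) \<le> 1"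
    unfolding bin_loads_bf_bins[OF assms(2)] by simp
  then show "\<forall>b\<in>set (bf_bins ys t). bin_load ys b \<le> 1"
    and "length (filter (\<lambda>b. bin_load ys b \<le> 1/2) (bf_bins ys t)) \<le> 1"
    by (simp_all add: filter_map comp_def)
qed

lemma length_lt_bin_load:
  assumes "b \<noteq> []" and "\<forall>i\<in>set b. 1/3 < ys ! i"
  shows "real (length b) / 3 < bin_load ys b"
  using sum_list_strict_mono[OF assms(1), of "\<lambda>_. 1/3" "\<lambda>i. ys ! i"] assms(2)
  by (simp add: bin_load_def sum_list_triv)

lemma bf_bins_bin_items:
  assumes "\<forall>x\<in>set ys. 1/3 < x" and "t \<le> length ys" and "b \<in> set (bf_bins ys t)"
  shows "b \<noteq> []" and "\<forall>i\<in>set b. i < t \<and> 1/3 < ys ! i"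
proof -
  show "b \<noteq> []"
    using assms(3) Nil_notin_bf_bins by metis
  have "i < t" if "i \<in> set b" for i
    using that assms(3) set_concat_bf_bins[of ys t] by auto
  then show "\<forall>i\<in>set b. i < t \<and> 1/3 < ys ! i"
    using assms(1,2) nth_mem[of _ ys] by fastforce
qed

lemma bf_bins_bin_shape:
  assumes items: "\<forall>x\<in>set ys. 1/3 < x \<and> x \<le> 1"
    and "t \<le> length ys" and b: "b \<in> set (bf_bins ys t)"
  shows "(\<exists>u. b = [u]) \<or> (\<exists>u v. b = [u, v])"
proof -
  have "real (length b) / 3 < bin_load ys b"
    using bf_bins_bin_items[OF _ assms(2) b] items by (intro length_lt_bin_load) auto
  moreover have "bin_load ys b \<le> 1"
    using bf_bins_loads(1)[OF _ assms(2)] items b by force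
  ultimately have "length b < 3"
    by linarith
  moreover have "b \<noteq> []"
    using bf_bins_bin_items[OF _ assms(2) b] items by auto
  ultimately show ?thesis
    by (cases b rule: remdups_adj.cases) auto
qed

lemma bf_bins_fitting_bin:
  assumes items: "\<forall>x\<in>set ys. 1/3 < x \<and> x \<le> 1"
    and t: "t < length ys" and b: "b \<in> set (bf_bins ys t)"
    and fits: "bin_load ys b + ys ! t \<le> 1"
  obtains y where "b = [y]" and "y < t"
proof -
  have items_b: "b \<noteq> []" "\<forall>i\<in>set b. i < t \<and> 1/3 < ys ! i"
    using bf_bins_bin_items[OF _ less_imp_le[OF t] b] items by auto
  have "real (length b) / 3 < bin_load ys b"
    using items_b by (intro length_lt_bin_load) auto
  moreover have "1/3 < ys ! t"
    using items t by simp
  ultimately have "length b < 2"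
    using fits by linarith
  with items_b that show thesis
    by (cases b) auto
qed

lemma bf_bins_step_cases:
  obtains (new_bin) "\<forall>b\<in>set B. 1 < bin_load ys b + ys ! t"
      and "bf_bins_step ys B t = B @ [[t]]"
  | (fit) j where "j < length B" and "bin_load ys (B ! j) + ys ! t \<le> 1"
      and "\<And>b. b \<in> set B \<Longrightarrow> bin_load ys b + ys ! t \<le> 1 \<Longrightarrow> bin_load ys b \<le> bin_load ys (B ! j)"
      and "bf_bins_step ys B t = B[j := B ! j @ [t]]"
proof (cases "bf_target (map (bin_load ys) B) (ys ! t)")
  case None
  then show thesis
    using new_bin None by (simp add: bf_target_None_iff bf_bins_step_def)
next
  case (Some j)
  note target = bf_target_SomeD[OF Some]
  show thesis
  proof (rule fit)
    show "j < length B" "bin_load ys (B ! j) + ys ! t \<le> 1"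
      using target(1,2) by simp_all
    show "bin_load ys b \<le> bin_load ys (B ! j)" if "b \<in> set B" "bin_load ys b + ys ! t \<le> 1" for b
      using target(1) target(3)[of "bin_load ys b"] that by simp
    show "bf_bins_step ys B t = B[j := B ! j @ [t]]"
      using Some by (simp add: bf_bins_step_def)
  qed
qed

lemma bf_bins_Suc_cases:
  assumes items: "\<forall>x\<in>set ys. 1/3 < x \<and> x \<le> 1" and t: "t < length ys"
  obtains (new_bin) "\<forall>b\<in>set (bf_bins ys t). 1 < bin_load ys b + ys ! t"
      and "bf_bins ys (Suc t) = bf_bins ys t @ [[t]]"
  | (join) j y where "j < length (bf_bins ys t)" and "bf_bins ys t ! j = [y]" and "y < t"
      and "ys ! y + ys ! t \<le> 1"
      and "\<And>b. b \<in> set (bf_bins ys t) \<Longrightarrow> bin_load ys b + ys ! t \<le> 1 \<Longrightarrow> bin_load ys b \<le> ys ! y"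
      and "bf_bins ys (Suc t) = (bf_bins ys t)[j := [y, t]]"
proof (cases rule: bf_bins_step_cases[where B = "bf_bins ys t" and ys = ys and t = t])
  case new_bin
  then show thesis
    using that(1) by (simp add: bf_bins_Suc)
next
  case (fit j)
  obtain y where "bf_bins ys t ! j = [y]" "y < t"
    using bf_bins_fitting_bin[OF items t nth_mem[OF fit(1)] fit(2)] .
  then show thesis
    using that(2)[of j y] fit by (simp add: bf_bins_Suc)
qed

definition large_pair_bin :: "real list \<Rightarrow> nat list \<Rightarrow> bool" where
  "large_pair_bin ys b \<longleftrightarrow> length b = 2 \<and> (\<exists>i\<in>set b. 1/2 < ys ! i)"

lemma bin_count_bound:
  assumes "(\<exists>u. b = [u]) \<or> (\<exists>u v. b = [u, v])" and "bin_load ys b \<le> 1"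
  shows "2 + length (filter (\<lambda>i. ys ! i \<le> 1/2) b) + (if large_pair_bin ys b then 1 else 0)
           \<le> 2 * length b + (if bin_load ys b \<le> 1/2 then 1 else 0)"
  using assms by (auto simp: large_pair_bin_def)

lemma sum_list_indicator: "(\<Sum>x\<leftarrow>xs. if P x then 1 else 0) = length (filter P xs)"
  by (induction xs) simp_all

lemma length_filter_mset_eq:
  "mset xs = mset ys \<Longrightarrow> length (filter P xs) = length (filter P ys)"
  by (metis mset_filter size_mset)

lemma BF_count_bound:
  assumes items: "\<forall>x\<in>set ys. 1/3 < x \<and> x \<le> 1"
  shows "2 * BF ys + length (filter (\<lambda>x. x \<le> 1/2) ys)
           + length (filter (large_pair_bin ys) (bf_bins ys (length ys))) \<le> 2 * length ys + 1"
proof -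
  define B where "B = bf_bins ys (length ys)"
  have items01: "\<forall>x\<in>set ys. 0 \<le> x \<and> x \<le> 1"
    using items by force
  have mset_B: "mset (concat B) = mset [0..<length ys]"
    unfolding B_def by (rule mset_concat_bf_bins)
  have "2 * length B + length (filter (\<lambda>i. ys ! i \<le> 1/2) (concat B))
          + length (filter (large_pair_bin ys) B)
        = (\<Sum>b\<leftarrow>B. 2 + length (filter (\<lambda>i. ys ! i \<le> 1/2) b) + (if large_pair_bin ys b then 1 else 0))"
    unfolding sum_list_addf
    by (simp add: sum_list_triv sum_list_indicator filter_concat length_concat o_def)
  also have "\<dots> \<le> (\<Sum>b\<leftarrow>B. 2 * length b + (if bin_load ys b \<le> 1/2 then 1 else 0))"
    using bf_bins_bin_shape[OF items order.refl] bf_bins_loads(1)[OF items01 order.refl]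
    by (intro sum_list_mono bin_count_bound) (auto simp: B_def)
  also have "\<dots> = 2 * length (concat B) + length (filter (\<lambda>b. bin_load ys b \<le> 1/2) B)"
    unfolding sum_list_addf
    by (simp add: sum_list_indicator length_concat sum_list_const_mult)
  also have "\<dots> \<le> 2 * length ys + 1"
    using bf_bins_loads(2)[OF items01 order.refl] mset_B unfolding B_def
    by (simp add: size_mset[symmetric] del: size_mset)
  moreover have "length (filter (\<lambda>i. ys ! i \<le> 1/2) (concat B)) = length (filter (\<lambda>x. x \<le> 1/2) ys)"
    using length_filter_mset_eq[OF mset_B, of "\<lambda>i. ys ! i \<le> 1/2"]
    by (simp add: length_filter_conv_card[of _ "[0..<length ys]"] length_filter_conv_card[of _ ys]
        cong: conj_cong)
  ultimately show ?thesis
    by (simp add: BF_eq_length_bf_bins B_def)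
qed

lemma inj_on_fst_pairD: "inj_on fst F \<Longrightarrow> (l, s) \<in> F \<Longrightarrow> (l, s') \<in> F \<Longrightarrow> s = s'"
  by (metis fst_conv inj_onD prod.inject)

lemma inj_on_snd_pairD: "inj_on snd F \<Longrightarrow> (l, s) \<in> F \<Longrightarrow> (l', s) \<in> F \<Longrightarrow> l = l'"
  by (metis snd_conv inj_onD prod.inject)

definition rewire :: "('a \<times> 'b) set \<Rightarrow> 'a \<Rightarrow> 'b \<Rightarrow> ('a \<times> 'b) set" where
  "rewire F a b = {p \<in> F. fst p \<noteq> a \<and> snd p \<noteq> b} \<union> {(l, s). (l, b) \<in> F \<and> (a, s) \<in> F \<and> l \<noteq> a}"

lemma inj_on_rewire:
  assumes "inj_on fst F" and "inj_on snd F"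
  shows "inj_on fst (rewire F a b)" and "inj_on snd (rewire F a b)"
  by (rule inj_onI;
      auto simp: rewire_def dest: inj_on_fst_pairD[OF assms(1)] inj_on_snd_pairD[OF assms(2)])+

lemma card_rewire:
  assumes "finite F" and fst: "inj_on fst F" and snd: "inj_on snd F"
  shows "card F \<le> card (rewire F a b) + 1"
proof -
  define K where "K = {p \<in> F. fst p \<noteq> a \<and> snd p \<noteq> b}"
  have "rewire F a b \<subseteq> F \<union> fst ` F \<times> snd ` F"
    by (force simp: rewire_def)
  then have fin: "finite (rewire F a b)"
    using assms(1) finite_subset by blast
  have K: "K \<subseteq> rewire F a b" "finite K"
    using assms(1) by (auto simp: K_def rewire_def)
  have F: "F = K \<union> ({p \<in> F. fst p = a} \<union> {p \<in> F. snd p = b})"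
    by (auto simp: K_def)
  have card_F: "card F \<le> card K + card ({p \<in> F. fst p = a} \<union> {p \<in> F. snd p = b})"
    by (subst F) (rule card_Un_le)
  show ?thesis
  proof (cases "\<exists>l s. (l, b) \<in> F \<and> (a, s) \<in> F \<and> l \<noteq> a")
    case True
    then obtain l s where ls: "(l, b) \<in> F" "(a, s) \<in> F" "l \<noteq> a"
      by blast
    have "{p \<in> F. fst p = a} = {(a, s)}" "{p \<in> F. snd p = b} = {(l, b)}"
      using ls fst snd by (auto dest: inj_on_fst_pairD inj_on_snd_pairD)
    then have "card F \<le> card K + 2"
      using card_F by (simp add: card_insert_if split: if_splits)
    moreover have "(l, s) \<notin> K"
      using ls fst by (auto simp: K_def dest: inj_on_fst_pairD)
    then have "card K + 1 \<le> card (rewire F a b)"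
      using ls K fin card_mono[of "rewire F a b" "insert (l, s) K"] by (simp add: rewire_def)
    ultimately show ?thesis
      by linarith
  next
    case False
    then have "card ({p \<in> F. fst p = a} \<union> {p \<in> F. snd p = b}) \<le> Suc 0"
      using fst snd assms(1)
      by (subst card_le_Suc0_iff_eq) (auto dest: inj_on_fst_pairD inj_on_snd_pairD, (metis inj_on_fst_pairD)+)
    then show ?thesis
      using card_F card_mono[OF fin K(1)] by linarith
  qed
qed

lemma in_set_update_other: "x \<in> set xs \<Longrightarrow> x \<noteq> xs ! j \<Longrightarrow> x \<in> set (xs[j := v])"
  by (metis in_set_conv_nth length_list_update nth_list_update_neq)

lemma length_filter_update:
  assumes "j < length xs" and "\<not> P (xs ! j)"
  shows "length (filter P (xs[j := v])) = length (filter P xs) + (if P v then 1 else 0)"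
proof -
  have "xs = take j xs @ xs ! j # drop (Suc j) xs"
    using assms(1) by (rule id_take_nth_drop)
  then have "length (filter P xs) = length (filter P (take j xs)) + length (filter P (drop (Suc j) xs))"
    using assms(2) by (metis filter.simps(2) filter_append length_append)
  then show ?thesis
    using assms(1) by (simp add: upd_conv_take_nth_drop)
qed

text \<open>A potential for the Best Fit run: Best Fit could still put both items of every pair
  \<open>(l, s)\<close> of \<open>F\<close> into one bin, and the number of bins pairing a large with a small item plus
  \<open>card F\<close> never decreases.\<close>

definition available_pairs :: "real list \<Rightarrow> nat \<Rightarrow> nat list list \<Rightarrow> (nat \<times> nat) set \<Rightarrow> bool" where
  "available_pairs ys t B F \<longleftrightarrow> inj_on fst F \<and> inj_on snd F \<and>
     (\<forall>(l, s)\<in>F. l < s \<and> t \<le> s \<and> s < length ys \<and> 1/2 < ys ! l \<and> ys ! l + ys ! s \<le> 1 \<and>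
        (t \<le> l \<or> [l] \<in> set B))"

lemma available_pairs_finite: "available_pairs ys t B F \<Longrightarrow> finite F"
  by (rule finite_subset[of _ "{..<length ys} \<times> {..<length ys}"])
    (auto simp: available_pairs_def)

lemma available_pairs_new_bin:
  assumes F: "available_pairs ys t B F" and overflow: "\<forall>b\<in>set B. 1 < bin_load ys b + ys ! t"
  shows "available_pairs ys (Suc t) (B @ [[t]]) F"
  unfolding available_pairs_def
proof (intro conjI ballI)
  fix p assume "p \<in> F"
  then obtain l s where p: "p = (l, s)" and ls: "l < s" "t \<le> s" "s < length ys" "1/2 < ys ! l"
    "ys ! l + ys ! s \<le> 1" "t \<le> l \<or> [l] \<in> set B"
    using F by (auto simp: available_pairs_def)
  have "s \<noteq> t"
    using ls overflow by fastforce
  then show "case p of (l, s) \<Rightarrow> l < s \<and> Suc t \<le> s \<and> s < length ys \<and> 1/2 < ys ! l \<and>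
      ys ! l + ys ! s \<le> 1 \<and> (Suc t \<le> l \<or> [l] \<in> set (B @ [[t]]))"
    using p ls by auto
qed (use F in \<open>simp_all add: available_pairs_def\<close>)

lemma available_pairs_join_small:
  assumes F: "available_pairs ys t B F"
    and j: "j < length B" "B ! j = [y]" and small: "ys ! y \<le> 1/2" "ys ! t \<le> 1/2"
    and best: "\<And>b. b \<in> set B \<Longrightarrow> bin_load ys b + ys ! t \<le> 1 \<Longrightarrow> bin_load ys b \<le> ys ! y"
  shows "available_pairs ys (Suc t) (B[j := [y, t]]) F"
  unfolding available_pairs_def
proof (intro conjI ballI)
  fix p assume "p \<in> F"
  then obtain l s where p: "p = (l, s)" and ls: "l < s" "t \<le> s" "s < length ys" "1/2 < ys ! l"
    "ys ! l + ys ! s \<le> 1" "t \<le> l \<or> [l] \<in> set B"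
    using F by (auto simp: available_pairs_def)
  have "s \<noteq> t"
    using ls small best[of "[l]"] by fastforce
  moreover have "l \<noteq> t" "[l] \<noteq> B ! j"
    using ls small j(2) by auto
  ultimately show "case p of (l, s) \<Rightarrow> l < s \<and> Suc t \<le> s \<and> s < length ys \<and> 1/2 < ys ! l \<and>
      ys ! l + ys ! s \<le> 1 \<and> (Suc t \<le> l \<or> [l] \<in> set (B[j := [y, t]]))"
    using p ls in_set_update_other[of "[l]" B j] by auto
qed (use F in \<open>simp_all add: available_pairs_def\<close>)

text \<open>When Best Fit pairs the large item \<open>a\<close> with the small item \<open>b\<close>, the partners of \<open>b\<close>
  and \<open>a\<close> in \<open>F\<close> remain an available pair: the partner of \<open>b = t\<close> is a singleton bin into
  which \<open>t\<close> fits, so by the Best Fit rule it is not larger than \<open>a = y\<close>.\<close>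

lemma available_pairs_join_large:
  assumes F: "available_pairs ys t B F"
    and j: "j < length B" "B ! j = [y]" "y < t" and fits: "ys ! y + ys ! t \<le> 1"
    and best: "\<And>b. b \<in> set B \<Longrightarrow> bin_load ys b + ys ! t \<le> 1 \<Longrightarrow> bin_load ys b \<le> ys ! y"
    and ab: "(a, b) = (y, t) \<or> (a, b) = (t, y)" and large: "1/2 < ys ! a"
  shows "available_pairs ys (Suc t) (B[j := [y, t]]) (rewire F a b)"
proof -
  have pair: "l < s \<and> t \<le> s \<and> s < length ys \<and> 1/2 < ys ! l \<and> ys ! l + ys ! s \<le> 1 \<and>
      (t \<le> l \<or> [l] \<in> set B)" if "(l, s) \<in> F" for l s
    using F that by (auto simp: available_pairs_def)
  have inj: "inj_on fst F" "inj_on snd F"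
    using F by (simp_all add: available_pairs_def)
  have keep: "[l] \<in> set (B[j := [y, t]])" if "[l] \<in> set B" "l \<noteq> y" for l
    using that j(2) by (intro in_set_update_other) auto
  have "l < s \<and> Suc t \<le> s \<and> s < length ys \<and> 1/2 < ys ! l \<and> ys ! l + ys ! s \<le> 1 \<and>
      (Suc t \<le> l \<or> [l] \<in> set (B[j := [y, t]]))" if "(l, s) \<in> rewire F a b" for l s
  proof (cases "(l, s) \<in> F \<and> l \<noteq> a \<and> s \<noteq> b")
    case True
    with pair[of l s] have "ys ! s < 1/2" "l \<noteq> a" "s \<noteq> b"
      by auto
    moreover have "ys ! b < 1/2"
      using ab large fits by auto
    ultimately have "l \<noteq> y" "l \<noteq> t" "s \<noteq> t"
      using pair[of l s] True ab large by auto
    with pair[of l s] True keep show ?thesis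
      by auto
  next
    case False
    with that have lb: "(l, b) \<in> F" and as: "(a, s) \<in> F" and "l \<noteq> a"
      by (auto simp: rewire_def)
    then have "b = t" "a = y"
      using pair[of l b] ab j(3) by auto
    then have "s \<noteq> t"
      using inj_on_snd_pairD[OF inj(2) lb] as \<open>l \<noteq> a\<close> by auto
    have "ys ! l \<le> ys ! y"
      using pair[of l b] lb best[of "[l]"] \<open>b = t\<close> by auto
    with pair[of l b] pair[of a s] lb as \<open>b = t\<close> \<open>a = y\<close> \<open>s \<noteq> t\<close> \<open>l \<noteq> a\<close> keep show ?thesis
      by auto
  qed
  then show ?thesis
    using inj_on_rewire[OF inj] by (auto simp: available_pairs_def)
qed

lemma available_pairs_Suc:
  assumes items: "\<forall>x\<in>set ys. 1/3 < x \<and> x \<le> 1" and t: "t < length ys"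
    and F: "available_pairs ys t (bf_bins ys t) F"
  obtains F' where "available_pairs ys (Suc t) (bf_bins ys (Suc t)) F'"
    and "length (filter (large_pair_bin ys) (bf_bins ys t)) + card F
           \<le> length (filter (large_pair_bin ys) (bf_bins ys (Suc t))) + card F'"
proof (cases rule: bf_bins_Suc_cases[OF items t, case_names new_bin join])
  case new_bin
  then show thesis
    using that[of F] available_pairs_new_bin[OF F] by (simp add: large_pair_bin_def)
next
  case (join j y)
  have count: "length (filter (large_pair_bin ys) (bf_bins ys (Suc t)))
      = length (filter (large_pair_bin ys) (bf_bins ys t)) + (if large_pair_bin ys [y, t] then 1 else 0)"
    using join(1,2,6) by (simp add: length_filter_update large_pair_bin_def)
  show thesis
  proof (cases "ys ! y \<le> 1/2 \<and> ys ! t \<le> 1/2")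
    case True
    then show thesis
      using that[of F] available_pairs_join_small[OF F join(1,2) _ _ join(5)] count join(6)
      by (simp add: large_pair_bin_def)
  next
    case False
    define a where "a = (if 1/2 < ys ! y then y else t)"
    define b where "b = (if 1/2 < ys ! y then t else y)"
    have ab: "(a, b) = (y, t) \<or> (a, b) = (t, y)" and "1/2 < ys ! a"
      using False by (auto simp: a_def b_def)
    have "available_pairs ys (Suc t) (bf_bins ys (Suc t)) (rewire F a b)"
      using available_pairs_join_large[OF F join(1-5) ab \<open>1/2 < ys ! a\<close>] join(6) by simp
    moreover have "card F \<le> card (rewire F a b) + 1"
      using F available_pairs_finite[OF F] by (intro card_rewire) (auto simp: available_pairs_def)
    ultimately show thesis
      using that[of "rewire F a b"] count False by (auto simp: large_pair_bin_def)
  qed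
qed

lemma available_pairs_le_large_pair_bins:
  assumes items: "\<forall>x\<in>set ys. 1/3 < x \<and> x \<le> 1" and F: "available_pairs ys 0 [] F"
  shows "card F \<le> length (filter (large_pair_bin ys) (bf_bins ys (length ys)))"
proof -
  have "\<exists>F'. available_pairs ys t (bf_bins ys t) F' \<and>
          card F \<le> length (filter (large_pair_bin ys) (bf_bins ys t)) + card F'"
    if "t \<le> length ys" for t
    using that
  proof (induction t)
    case 0
    then show ?case using F by auto
  next
    case (Suc t)
    then obtain F' where F': "available_pairs ys t (bf_bins ys t) F'"
      and le: "card F \<le> length (filter (large_pair_bin ys) (bf_bins ys t)) + card F'"
      by auto
    obtain F'' where "available_pairs ys (Suc t) (bf_bins ys (Suc t)) F''"
      and "length (filter (large_pair_bin ys) (bf_bins ys t)) + card F'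
             \<le> length (filter (large_pair_bin ys) (bf_bins ys (Suc t))) + card F''"
      using available_pairs_Suc[OF items _ F'] Suc.prems by auto
    with le show ?case
      by auto
  qed
  then obtain F' where "available_pairs ys (length ys) (bf_bins ys (length ys)) F'"
    and le: "card F \<le> length (filter (large_pair_bin ys) (bf_bins ys (length ys))) + card F'"
    by auto
  then have "F' = {}"
    by (force simp: available_pairs_def)
  with le show ?thesis
    by simp
qed

lemma OPT_feasible:
  assumes "\<forall>x\<in>set xs. x \<le> 1"
  shows "\<exists>f. feasible_packing xs (OPT xs) f"
proof -
  have "{i. i < length xs \<and> i = b} = {b}" if "b < length xs" for b
    using that by auto
  then have "feasible_packing xs (length xs) id"
    using assms by (auto simp: feasible_packing_def)
  then have "\<exists>k f. feasible_packing xs k f"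
    by blast
  then show ?thesis
    unfolding OPT_def by (rule LeastI_ex[where P = "\<lambda>k. \<exists>f. feasible_packing xs k f"])
qed

lemma feasible_packing_pair:
  assumes f: "feasible_packing xs K f" and nonneg: "\<forall>x\<in>set xs. 0 \<le> x"
    and "i < length xs" "j < length xs" "i \<noteq> j" "f i = f j"
  shows "xs ! i + xs ! j \<le> 1"
proof -
  have "xs ! i + xs ! j = (\<Sum>k\<in>{i, j}. xs ! k)"
    using assms(5) by simp
  also have "\<dots> \<le> (\<Sum>k\<in>{k. k < length xs \<and> f k = f i}. xs ! k)"
    using assms(3-6) nonneg by (intro sum_mono2) auto
  also have "\<dots> \<le> 1"
    using f assms(3) by (simp add: feasible_packing_def)
  finally show ?thesis .
qed

lemma feasible_packing_bin_card:
  assumes f: "feasible_packing xs K f" and items: "\<forall>x\<in>set xs. 1/3 < x"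
  shows "card {i. i < length xs \<and> f i = b} \<le> 2"
proof (cases "{i. i < length xs \<and> f i = b} = {}")
  case False
  define A where "A = {i. i < length xs \<and> f i = b}"
  have "b < K"
    using False f by (auto simp: feasible_packing_def)
  have "real (card A) / 3 = (\<Sum>i\<in>A. 1/3)"
    by simp
  also have "\<dots> < (\<Sum>i\<in>A. xs ! i)"
    using False items by (intro sum_strict_mono) (auto simp: A_def)
  also have "\<dots> \<le> 1"
    using f \<open>b < K\<close> by (simp add: feasible_packing_def A_def)
  finally show ?thesis
    by (simp add: A_def)
next
  case True
  then show ?thesis
    by (metis card.empty zero_le)
qed

lemma card_le_mult_card_image:
  assumes "finite A" and "\<And>b. card {a \<in> A. f a = b} \<le> k"
  shows "card A \<le> k * card (f ` A)"
proof -
  have "card A \<le> card (\<Union>b\<in>f ` A. {a \<in> A. f a = b})"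
    using assms(1) by (intro card_mono) auto
  also have "\<dots> \<le> (\<Sum>b\<in>f ` A. card {a \<in> A. f a = b})"
    using assms(1) by (intro card_UN_le) simp
  also have "\<dots> \<le> (\<Sum>b\<in>f ` A. k)"
    using assms(2) by (rule sum_mono)
  finally show ?thesis
    by (simp add: mult.commute)
qed

lemma feasible_packing_lower_bound:
  assumes items: "\<forall>x\<in>set xs. 1/3 < x \<and> x \<le> 1" and f: "feasible_packing xs K f"
  defines "L \<equiv> {i. i < length xs \<and> 1/2 < xs ! i}"
    and "E \<equiv> {i. i < length xs \<and> xs ! i \<le> 1/2 \<and> f i \<notin> f ` {a. a < length xs \<and> 1/2 < xs ! a}}"
  shows "2 * card L + card E \<le> 2 * K"
proof -
  have nonneg: "\<forall>x\<in>set xs. 0 \<le> x"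
    using items by force
  have "inj_on f L"
  proof (rule inj_onI, rule ccontr)
    fix i j assume "i \<in> L" "j \<in> L" "f i = f j" "i \<noteq> j"
    then show False
      using feasible_packing_pair[OF f nonneg, of i j] by (simp add: L_def)
  qed
  then have "card (f ` L) = card L"
    by (rule card_image)
  have "card E \<le> 2 * card (f ` E)"
  proof (rule card_le_mult_card_image)
    fix b
    have "card {i \<in> E. f i = b} \<le> card {i. i < length xs \<and> f i = b}"
      by (intro card_mono) (auto simp: E_def)
    also have "\<dots> \<le> 2"
      using feasible_packing_bin_card[OF f] items by force
    finally show "card {i \<in> E. f i = b} \<le> 2" .
  qed (simp add: E_def)
  moreover have "card (f ` L) + card (f ` E) \<le> K"
  proof -
    have "card (f ` L) + card (f ` E) = card (f ` L \<union> f ` E)"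
      by (rule card_Un_disjoint[symmetric]) (auto simp: L_def E_def image_iff)
    also have "\<dots> \<le> card {..<K}"
      using f by (intro card_mono) (auto simp: L_def E_def feasible_packing_def)
    finally show ?thesis
      by simp
  qed
  ultimately show ?thesis
    using \<open>card (f ` L) = card L\<close> by linarith
qed

lemma feasible_packing_partners:
  assumes items: "\<forall>x\<in>set xs. 1/3 < x \<and> x \<le> 1" and f: "feasible_packing xs K f"
  defines "L \<equiv> {a. a < length xs \<and> 1/2 < xs ! a}"
    and "D \<equiv> {c. c < length xs \<and> xs ! c \<le> 1/2 \<and> f c \<in> f ` {a. a < length xs \<and> 1/2 < xs ! a}}"
  obtains g where "inj_on g D" and "g ` D \<subseteq> L" and "\<And>c. c \<in> D \<Longrightarrow> xs ! g c + xs ! c \<le> 1"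
proof
  define g where "g c = (SOME a. a \<in> L \<and> f a = f c)" for c
  have g: "g c \<in> L \<and> f (g c) = f c" if "c \<in> D" for c
  proof -
    have "\<exists>a. a \<in> L \<and> f a = f c"
      using that by (force simp: D_def L_def)
    then show ?thesis
      unfolding g_def by (rule someI_ex)
  qed
  then have g_ne: "g c \<noteq> c" if "c \<in> D" for c
    using that by (fastforce simp: D_def L_def)
  moreover have nonneg: "\<forall>x\<in>set xs. 0 \<le> x"
    using items by force
  ultimately show "xs ! g c + xs ! c \<le> 1" if "c \<in> D" for c
    using that g[OF that] feasible_packing_pair[OF f nonneg, of "g c" c] by (simp add: D_def L_def)
  show "g ` D \<subseteq> L"
    using g by blast
  show "inj_on g D"
  proof (rule inj_onI, rule ccontr)
    fix c c' assume c: "c \<in> D" "c' \<in> D" "g c = g c'" "c \<noteq> c'"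
    have gc: "g c \<in> L" "f (g c) = f c" "f (g c') = f c'"
      using g c(1,2) by auto
    have "3 = card {g c, c, c'}"
      using c g_ne[OF c(1)] g_ne[OF c(2)] by simp
    also have "\<dots> \<le> card {i. i < length xs \<and> f i = f c}"
      using c(1,2,3) gc by (intro card_mono) (auto simp: D_def L_def)
    also have "\<dots> \<le> 2"
      using feasible_packing_bin_card[OF f] items by force
    finally show False
      by simp
  qed
qed

lemma OPT_small_large_matching:
  assumes items: "\<forall>x\<in>set xs. 1/3 < x \<and> x \<le> 1"
  obtains D g where "D \<subseteq> {c. c < length xs \<and> xs ! c \<le> 1/2}" and "inj_on g D"
    and "\<And>c. c \<in> D \<Longrightarrow> g c < length xs \<and> 1/2 < xs ! g c \<and> xs ! g c + xs ! c \<le> 1"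
    and "2 * length xs \<le> 2 * OPT xs + length (filter (\<lambda>x. x \<le> 1/2) xs) + card D"
    and "card D \<le> OPT xs"
proof -
  have "\<forall>x\<in>set xs. x \<le> 1"
    using items by simp
  then obtain f where f: "feasible_packing xs (OPT xs) f"
    using OPT_feasible by blast
  define L where "L = {a. a < length xs \<and> 1/2 < xs ! a}"
  define S where "S = {c. c < length xs \<and> xs ! c \<le> 1/2}"
  define D where "D = {c. c < length xs \<and> xs ! c \<le> 1/2 \<and> f c \<in> f ` L}"
  obtain g where g: "inj_on g D" "g ` D \<subseteq> L" "\<And>c. c \<in> D \<Longrightarrow> xs ! g c + xs ! c \<le> 1"
    using feasible_packing_partners[OF items f] unfolding L_def D_def by blast
  have "S - D = {c. c < length xs \<and> xs ! c \<le> 1/2 \<and> f c \<notin> f ` L}"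
    unfolding S_def D_def by blast
  then have lower: "2 * card L + card (S - D) \<le> 2 * OPT xs"
    using feasible_packing_lower_bound[OF items f] by (simp add: L_def)
  have "card D \<le> card L"
    using card_image[OF g(1)] card_mono[OF _ g(2)] by (simp add: L_def)
  have "length xs = card L + card S"
    using sum_length_filter_compl[of "\<lambda>x. x \<le> 1/2" xs]
    by (simp add: L_def S_def length_filter_conv_card not_le)
  moreover have "card S = card D + card (S - D)"
    using card_Diff_subset[of D S] card_mono[of S D] by (force simp: D_def S_def)
  moreover have "length (filter (\<lambda>x. x \<le> 1/2) xs) = card S"
    by (simp add: S_def length_filter_conv_card)
  ultimately have "2 * length xs \<le> 2 * OPT xs + length (filter (\<lambda>x. x \<le> 1/2) xs) + card D"
    using lower by linarith
  moreover have "card D \<le> OPT xs"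
    using \<open>card D \<le> card L\<close> lower by linarith
  moreover have "D \<subseteq> {c. c < length xs \<and> xs ! c \<le> 1/2}"
    by (auto simp: D_def)
  moreover have "g c < length xs \<and> 1/2 < xs ! g c \<and> xs ! g c + xs ! c \<le> 1" if "c \<in> D" for c
    using g(2,3) that by (auto simp: L_def)
  ultimately show thesis
    using that g(1) by blast
qed

definition before_count :: "(nat \<Rightarrow> nat) \<Rightarrow> (nat \<Rightarrow> nat) \<Rightarrow> nat set \<Rightarrow> nat" where
  "before_count \<pi> g D = card {c \<in> D. \<pi> c < \<pi> (g c)}"

lemma before_count_add_card_after:
  assumes "inj \<pi>" and "finite D" and "\<forall>c\<in>D. g c \<noteq> c"
  shows "before_count \<pi> g D + card {c \<in> D. \<pi> (g c) < \<pi> c} = card D"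
proof -
  have "\<pi> c \<noteq> \<pi> (g c)" if "c \<in> D" for c
    using assms(1,3) that by (auto simp: inj_eq)
  then have "D = {c \<in> D. \<pi> c < \<pi> (g c)} \<union> {c \<in> D. \<pi> (g c) < \<pi> c}"
    by (auto simp: neq_iff)
  moreover have "card ({c \<in> D. \<pi> c < \<pi> (g c)} \<union> {c \<in> D. \<pi> (g c) < \<pi> c})
      = card {c \<in> D. \<pi> c < \<pi> (g c)} + card {c \<in> D. \<pi> (g c) < \<pi> c}"
    using assms(2) by (intro card_Un_disjoint) auto
  ultimately show ?thesis
    by (simp add: before_count_def)
qed

text \<open>Position \<open>inv \<sigma> c\<close> of \<open>permute_list \<sigma> xs\<close> holds item \<open>c\<close> of \<open>xs\<close>, so every item
  \<open>c \<in> D\<close> that arrives after its large partner \<open>g c\<close> yields an available pair.\<close>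

lemma available_pairs_partners:
  assumes \<sigma>: "\<sigma> permutes {..<length xs}" and D: "D \<subseteq> {..<length xs}" and inj: "inj_on g D"
    and g: "\<And>c. c \<in> D \<Longrightarrow> g c < length xs \<and> 1/2 < xs ! g c \<and> xs ! g c + xs ! c \<le> 1"
  obtains F where "available_pairs (permute_list \<sigma> xs) 0 [] F"
    and "card F = card {c \<in> D. inv \<sigma> (g c) < inv \<sigma> c}"
proof
  define \<pi> where "\<pi> = inv \<sigma>"
  define A where "A = {c \<in> D. \<pi> (g c) < \<pi> c}"
  define F where "F = (\<lambda>c. (\<pi> (g c), \<pi> c)) ` A"
  have \<pi>: "\<pi> permutes {..<length xs}"
    unfolding \<pi>_def using \<sigma> by (rule permutes_inv)
  then have inj_\<pi>: "inj \<pi>"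
    by (rule permutes_inj)
  have nth_\<pi>: "permute_list \<sigma> xs ! \<pi> c = xs ! c" if "c < length xs" for c
    using that \<sigma> permutes_in_image[OF \<pi>]
    by (simp add: \<pi>_def permute_list_nth permutes_inverses(1))
  have "\<pi> (g c) < \<pi> c \<and> \<pi> c < length xs \<and> 1/2 < permute_list \<sigma> xs ! \<pi> (g c) \<and>
      permute_list \<sigma> xs ! \<pi> (g c) + permute_list \<sigma> xs ! \<pi> c \<le> 1" if "c \<in> A" for c
  proof -
    have "c \<in> D" "c < length xs" "g c < length xs"
      using that D g by (auto simp: A_def)
    then show ?thesis
      using that g nth_\<pi> permutes_in_image[OF \<pi>] by (simp add: A_def)
  qed
  moreover have "inj_on fst F"
    using inj by (auto simp: F_def A_def inj_on_def inj_eq[OF inj_\<pi>])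
  moreover have "inj_on snd F"
    by (auto simp: F_def inj_on_def inj_eq[OF inj_\<pi>])
  ultimately show "available_pairs (permute_list \<sigma> xs) 0 [] F"
    by (auto simp: available_pairs_def F_def)
  show "card F = card {c \<in> D. inv \<sigma> (g c) < inv \<sigma> c}"
    unfolding F_def A_def \<pi>_def by (rule card_image) (auto simp: inj_on_def inj_eq[OF inj_\<pi>[unfolded \<pi>_def]])
qed

lemma BF_permute_list_bound:
  assumes items: "\<forall>x\<in>set xs. 1/3 < x \<and> x \<le> 1" and \<sigma>: "\<sigma> permutes {..<length xs}"
    and D: "D \<subseteq> {c. c < length xs \<and> xs ! c \<le> 1/2}" and inj: "inj_on g D"
    and g: "\<And>c. c \<in> D \<Longrightarrow> g c < length xs \<and> 1/2 < xs ! g c \<and> xs ! g c + xs ! c \<le> 1"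
    and opt: "2 * length xs \<le> 2 * OPT xs + length (filter (\<lambda>x. x \<le> 1/2) xs) + card D"
  shows "BF (permute_list \<sigma> xs) \<le> OPT xs + (before_count (inv \<sigma>) g D + 1) div 2"
proof -
  define ys where "ys = permute_list \<sigma> xs"
  have items_ys: "\<forall>x\<in>set ys. 1/3 < x \<and> x \<le> 1"
    using items by (simp add: ys_def set_permute_list[OF \<sigma>])
  have small_ys: "length (filter (\<lambda>x. x \<le> 1/2) ys) = length (filter (\<lambda>x. x \<le> 1/2) xs)"
    using length_filter_mset_eq[OF mset_permute_list[OF \<sigma>]] by (simp add: ys_def)
  obtain F where "available_pairs ys 0 [] F" and card_F: "card F = card {c \<in> D. inv \<sigma> (g c) < inv \<sigma> c}"
    using available_pairs_partners[OF \<sigma> _ inj g] D unfolding ys_def by blast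
  then have "card {c \<in> D. inv \<sigma> (g c) < inv \<sigma> c} \<le> length (filter (large_pair_bin ys) (bf_bins ys (length ys)))"
    using available_pairs_le_large_pair_bins[OF items_ys] by metis
  moreover have "before_count (inv \<sigma>) g D + card {c \<in> D. inv \<sigma> (g c) < inv \<sigma> c} = card D"
  proof (rule before_count_add_card_after)
    show "inj (inv \<sigma>)"
      using \<sigma> by (intro permutes_inj permutes_inv)
    show "finite D"
      using D by (rule finite_subset) auto
    show "\<forall>c\<in>D. g c \<noteq> c"
      using D g by force
  qed
  ultimately have "2 * BF ys \<le> 2 * OPT xs + before_count (inv \<sigma>) g D + 1"
    using BF_count_bound[OF items_ys] small_ys opt by (simp add: ys_def)
  then show ?thesis
    unfolding ys_def by presburger
qed

lemma card_permutes_less: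
  assumes "a < n" "b < n" "a \<noteq> b"
  shows "2 * card {\<pi>. \<pi> permutes {..<n} \<and> \<pi> a < \<pi> b} = fact n"
proof -
  define P where "P = {\<pi>. \<pi> permutes {..<n}}"
  have fin: "finite P"
    by (simp add: P_def finite_permutations)
  have "card {\<pi> \<in> P. \<pi> a < \<pi> b} = (\<Sum>\<pi>\<in>P. if \<pi> a < \<pi> b then 1 else 0)"
    using fin by (simp add: sum.inter_filter[symmetric])
  also have "\<dots> = (\<Sum>\<pi>\<in>P. if \<pi> b < \<pi> a then 1 else 0)"
    using sum_permutations_compose_right[OF permutes_swap_id[of a "{..<n}" b],
        of "\<lambda>\<pi>. if \<pi> a < \<pi> b then 1 else (0::nat)"] assms
    by (simp add: P_def)
  finally have "2 * card {\<pi> \<in> P. \<pi> a < \<pi> b}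
      = (\<Sum>\<pi>\<in>P. (if \<pi> a < \<pi> b then 1 else 0) + (if \<pi> b < \<pi> a then 1 else 0))"
    using fin by (simp add: sum.distrib sum.inter_filter[symmetric])
  also have "\<dots> = (\<Sum>\<pi>\<in>P. 1)"
  proof (rule sum.cong)
    fix \<pi> assume "\<pi> \<in> P"
    then have "\<pi> a \<noteq> \<pi> b"
      using assms(3) by (auto simp: P_def dest: permutes_inj injD)
    then show "(if \<pi> a < \<pi> b then 1 else 0) + (if \<pi> b < \<pi> a then 1 else 0) = (1::nat)"
      by auto
  qed simp
  also have "\<dots> = fact n"
    by (simp add: P_def card_permutations)
  finally show ?thesis
    by (simp add: P_def)
qed

lemma sum_before_count:
  assumes D: "D \<subseteq> {..<n}" and g: "\<forall>c\<in>D. g c < n \<and> g c \<noteq> c"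
  shows "2 * (\<Sum>\<pi> | \<pi> permutes {..<n}. before_count \<pi> g D) = card D * fact n"
proof -
  define P where "P = {\<pi>. \<pi> permutes {..<n}}"
  have fin: "finite P" "finite D"
    using D finite_subset by (auto simp: P_def finite_permutations)
  have "(\<Sum>\<pi>\<in>P. before_count \<pi> g D) = (\<Sum>\<pi>\<in>P. \<Sum>c\<in>D. if \<pi> c < \<pi> (g c) then 1 else 0)"
    unfolding before_count_def using fin by (simp add: sum.inter_filter[symmetric])
  also have "\<dots> = (\<Sum>c\<in>D. \<Sum>\<pi>\<in>P. if \<pi> c < \<pi> (g c) then 1 else 0)"
    by (rule sum.swap)
  also have "\<dots> = (\<Sum>c\<in>D. card {\<pi>. \<pi> permutes {..<n} \<and> \<pi> c < \<pi> (g c)})"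
    using fin by (simp add: P_def sum.inter_filter[symmetric] Collect_conj_eq[symmetric])
  finally have "2 * (\<Sum>\<pi>\<in>P. before_count \<pi> g D)
      = (\<Sum>c\<in>D. 2 * card {\<pi>. \<pi> permutes {..<n} \<and> \<pi> c < \<pi> (g c)})"
    by (simp add: sum_distrib_left)
  also have "\<dots> = (\<Sum>c\<in>D. fact n)"
    using D g by (intro sum.cong refl card_permutes_less) auto
  finally show ?thesis
    by (simp add: P_def)
qed

lemma before_count_remove:
  assumes "finite D" "c \<in> D"
  shows "before_count \<pi> g D = before_count \<pi> g (D - {c}) + (if \<pi> c < \<pi> (g c) then 1 else 0)"
proof -
  have "{d \<in> D. \<pi> d < \<pi> (g d)} = {d \<in> D - {c}. \<pi> d < \<pi> (g d)} \<union> (if \<pi> c < \<pi> (g c) then {c} else {})"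
    using assms(2) by auto
  then show ?thesis
    using assms(1) by (simp add: before_count_def)
qed

lemma before_count_compose_transpose:
  assumes "\<And>c. c \<in> D \<Longrightarrow> c \<notin> {a, b} \<and> g c \<notin> {a, b}"
  shows "before_count (\<pi> \<circ> transpose a b) g D = before_count \<pi> g D"
proof -
  have "{c \<in> D. (\<pi> \<circ> transpose a b) c < (\<pi> \<circ> transpose a b) (g c)} = {c \<in> D. \<pi> c < \<pi> (g c)}"
    using assms by auto
  then show ?thesis
    by (simp add: before_count_def)
qed

text \<open>Swapping the positions of \<open>c \<in> D\<close> and its partner \<open>g c\<close> flips the comparison of \<open>c\<close>
  with \<open>g c\<close> and keeps all others, so the roundings of the two halves compensate.\<close>

lemma before_count_swap_partner:
  assumes "finite D" and c: "c \<in> D" and inj: "inj_on g D" and g: "\<forall>d\<in>D. g d \<notin> D"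
    and "inj \<pi>"
  shows "(before_count \<pi> g D + 1) div 2 + (before_count (\<pi> \<circ> transpose c (g c)) g D + 1) div 2
           = before_count \<pi> g (D - {c}) + 1"
proof -
  have "d \<notin> {c, g c} \<and> g d \<notin> {c, g c}" if "d \<in> D - {c}" for d
    using that g c inj by (auto dest: inj_onD)
  then have "before_count (\<pi> \<circ> transpose c (g c)) g (D - {c}) = before_count \<pi> g (D - {c})"
    by (intro before_count_compose_transpose) blast
  moreover have "\<pi> c \<noteq> \<pi> (g c)"
    using g c \<open>inj \<pi>\<close> by (metis injD)
  ultimately show ?thesis
    using before_count_remove[OF assms(1) c, of \<pi> g]
      before_count_remove[OF assms(1) c, of "\<pi> \<circ> transpose c (g c)" g]
    by auto
qed

lemma sum_half_before_count:
  assumes D: "D \<subseteq> {..<n}" and g: "\<forall>c\<in>D. g c < n \<and> g c \<notin> D" and inj: "inj_on g D"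
  shows "4 * (\<Sum>\<pi> | \<pi> permutes {..<n}. (before_count \<pi> g D + 1) div 2) \<le> fact n * (card D + 1)"
proof (cases "D = {}")
  case True
  then show ?thesis
    by (simp add: before_count_def)
next
  case False
  then obtain c where c: "c \<in> D"
    by blast
  define P where "P = {\<pi>. \<pi> permutes {..<n}}"
  define h where "h \<pi> = (before_count \<pi> g D + 1) div 2" for \<pi>
  have fin: "finite D"
    using D finite_subset by blast
  have "2 * sum h P = sum h P + (\<Sum>\<pi>\<in>P. h (\<pi> \<circ> transpose c (g c)))"
    using sum_permutations_compose_right[OF permutes_swap_id[of c "{..<n}" "g c"], of h] c D g
    by (auto simp: P_def)
  also have "\<dots> = (\<Sum>\<pi>\<in>P. before_count \<pi> g (D - {c}) + 1)"
    unfolding sum.distrib[symmetric] h_def P_def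
    using before_count_swap_partner[OF fin c inj] g by (intro sum.cong refl) (auto intro: permutes_inj)
  also have "\<dots> = (\<Sum>\<pi>\<in>P. before_count \<pi> g (D - {c})) + fact n"
    unfolding sum.distrib by (simp add: P_def card_permutations)
  finally have "4 * sum h P = 2 * (\<Sum>\<pi>\<in>P. before_count \<pi> g (D - {c})) + 2 * fact n"
    by simp
  also have "2 * (\<Sum>\<pi>\<in>P. before_count \<pi> g (D - {c})) = (card D - 1) * fact n"
    unfolding P_def using D g fin c by (subst sum_before_count) auto
  finally show ?thesis
    using c fin by (cases "card D") (auto simp: h_def P_def algebra_simps)
qed

lemma permute_list_by_eq_permute_list: "permute_list_by \<sigma> xs = permute_list \<sigma> xs"
  by (simp add: permute_list_by_def permute_list_def)

theorem theorem1:
  fixes xs :: "real list"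
  assumes "\<forall>x\<in>set xs. 1/3 < x \<and> x \<le> 1"
  shows "expected_BF_random_order xs \<le> 5/4 * real (OPT xs) + 1/4"
proof -
  define P where "P = {\<sigma>. \<sigma> permutes {..<length xs}}"
  obtain D g where D: "D \<subseteq> {c. c < length xs \<and> xs ! c \<le> 1/2}" and inj: "inj_on g D"
    and g: "\<And>c. c \<in> D \<Longrightarrow> g c < length xs \<and> 1/2 < xs ! g c \<and> xs ! g c + xs ! c \<le> 1"
    and opt: "2 * length xs \<le> 2 * OPT xs + length (filter (\<lambda>x. x \<le> 1/2) xs) + card D"
    and "card D \<le> OPT xs"
    using OPT_small_large_matching[OF assms] by blast
  define h where "h \<pi> = (before_count \<pi> g D + 1) div 2" for \<pi>
  have "(\<Sum>\<sigma>\<in>P. BF (permute_list_by \<sigma> xs)) \<le> (\<Sum>\<sigma>\<in>P. OPT xs + h (inv \<sigma>))"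
    using BF_permute_list_bound[OF assms _ D inj g opt]
    by (intro sum_mono) (simp add: P_def h_def permute_list_by_eq_permute_list)
  also have "\<dots> = fact (length xs) * OPT xs + (\<Sum>\<pi>\<in>P. h \<pi>)"
    by (simp add: sum.distrib P_def card_permutations sum_permutations_inverse[symmetric])
  finally have "4 * (\<Sum>\<sigma>\<in>P. BF (permute_list_by \<sigma> xs))
      \<le> 4 * fact (length xs) * OPT xs + fact (length xs) * (card D + 1)"
    using sum_half_before_count[of D "length xs" g] D g inj unfolding P_def h_def by force
  also have "\<dots> \<le> fact (length xs) * (5 * OPT xs + 1)"
    using \<open>card D \<le> OPT xs\<close> by (simp add: algebra_simps)
  finally have "real (4 * (\<Sum>\<sigma>\<in>P. BF (permute_list_by \<sigma> xs)))
      \<le> real (fact (length xs) * (5 * OPT xs + 1))"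
    by (rule of_nat_mono)
  then show ?thesis
    unfolding expected_BF_random_order_def P_def by (simp add: field_simps)
qed

end
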